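(* Let $K\subseteq V$ be a regular closed convex cone and $e\in\operatorname{int}(K)$. If $|||\cdot|||=\|\cdot\|_e$, then for all $L\in\mathrm{Gr}(V,m)$ $$\nu(L)=\min_{u\in\Delta(K^* )}\max_{x\in L,\|x\|\le1}\langle x,u\rangle=\max_{x\in L,\|x\|\le1}\min_{u\in\Delta(K^* )}\langle x,u\rangle=\max_{x\in L,\|x\|\le1}\lambda_e(x).$$
   Context: $V$ is a finite-dimensional real vector space with inner product $\langle\cdot,\cdot\rangle$; $K^*:=\{u:\langle u,x\rangle\ge0\ \forall x\in K\}$; $L^\perp$ is the orthogonal complement; $\mathrm{Gr}(V,m)$ is the set of $m$-dimensional subspaces ($1\le m<\dim V$). $\|\cdot\|$ is an arbitrary norm on $V$ with dual norm $\|u\|^*:=\max_{\|x\|=1}\langle u,x\rangle$. The norm induced by $(K,e)$ is $\|x\|_e:=\min\{\alpha\ge0: x+\alpha e\in K,\ -x+\alpha e\in K\}$, with dual norm $\|u\|_e^*:=\max_{\|x\|_e=1}\langle u,x\rangle$ (which equals $\langle u,e\rangle$ for $u\in K^*$). $\Delta(K^* ):=\{u\in K^*:\langle u,e\rangle=1\}$. The eigenvalue map is $\lambda_e(x):=\max\{t\in\mathbb R: x-te\in K\}$. With $|||\cdot|||$ a norm on $V$ with dual norm $|||\cdot|||^*$, $\nu(L):=\min\{\|y-u\|^*:u\in K^*,y\in L^\perp,|||u|||^*=1\}$. *)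

theory Defs
  imports "HOL-Analysis.Analysis"
begin

definition is_norm :: "('a::real_vector \<Rightarrow> real) \<Rightarrow> bool" where
  "is_norm N \<longleftrightarrow> (\<forall>x. N x = 0 \<longleftrightarrow> x = 0) \<and> (\<forall>c x. N (c *\<^sub>R x) = \<bar>c\<bar> * N x)
     \<and> (\<forall>x y. N (x + y) \<le> N x + N y)"

definition dual_norm :: "('a::real_inner \<Rightarrow> real) \<Rightarrow> 'a \<Rightarrow> real" where
  "dual_norm N u = Sup {u \<bullet> x | x. N x = 1}"

definition dual_cone :: "'a::real_inner set \<Rightarrow> 'a set" where
  "dual_cone K = {u. \<forall>x\<in>K. u \<bullet> x \<ge> 0}"

definition regular_closed_convex_cone :: "'a::euclidean_space set \<Rightarrow> bool" where
  "regular_closed_convex_cone K \<longleftrightarrow> closed K \<and> convex K \<and> cone K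
     \<and> K \<inter> uminus ` K = {0} \<and> interior K \<noteq> {}"

definition norm_e :: "'a::real_vector set \<Rightarrow> 'a \<Rightarrow> 'a \<Rightarrow> real" where
  "norm_e K e x = Inf {\<alpha>. \<alpha> \<ge> 0 \<and> x + \<alpha> *\<^sub>R e \<in> K \<and> - x + \<alpha> *\<^sub>R e \<in> K}"

definition simplex_dual :: "'a::real_inner set \<Rightarrow> 'a \<Rightarrow> 'a set" where
  "simplex_dual K e = {u \<in> dual_cone K. u \<bullet> e = 1}"

definition lambda_e :: "'a::real_vector set \<Rightarrow> 'a \<Rightarrow> 'a \<Rightarrow> real" where
  "lambda_e K e x = Sup {t. x - t *\<^sub>R e \<in> K}"

definition nu :: "('a::real_inner \<Rightarrow> real) \<Rightarrow> ('a \<Rightarrow> real) \<Rightarrow> 'a set \<Rightarrow> 'a set \<Rightarrow> real" where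
  "nu N M K L = Inf {dual_norm N (y - u) | u y.
      u \<in> dual_cone K \<and> y \<in> orthogonal_comp L \<and> dual_norm M u = 1}"

end

theory Submission
  imports Defs
begin

text \<open>Since \<open>K\<close> is closed and \<open>e\<close> is interior, \<open>\<Delta>(K\<^sup>*)\<close> is compact and cuts out \<open>K\<close>:
  \<open>x - t e \<in> K\<close> iff \<open>t \<le> \<langle>x,u\<rangle>\<close> for all \<open>u \<in> \<Delta>(K\<^sup>*)\<close>, so \<open>\<lambda>\<^sub>e(x) = min\<^sub>u \<langle>x,u\<rangle>\<close>.
  If \<open>c\<close> is the max-min value over the unit ball \<open>B\<close> of \<open>L\<close>, then \<open>B - c e\<close> misses \<open>int K\<close>;
  a separating functional, normalised, is a \<open>u \<in> \<Delta>(K\<^sup>*)\<close> with \<open>\<langle>x,u\<rangle> \<le> c\<close> on \<open>B\<close>, which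
  gives the min-max equality. On \<open>K\<^sup>*\<close> the dual of \<open>\<parallel>\<cdot>\<parallel>\<^sub>e\<close> is \<open>\<langle>u,e\<rangle>\<close>, so \<open>\<nu>(L)\<close> is the
  minimum of \<open>\<parallel>y - u\<parallel>\<^sup>*\<close> over \<open>u \<in> \<Delta>(K\<^sup>*)\<close>, \<open>y \<in> L\<^sup>\<bottom>\<close>. Each such value bounds
  \<open>max\<^sub>B \<langle>x,u\<rangle>\<close> because \<open>x \<bottom> y\<close>. Conversely, for that \<open>u\<close> the functional \<open>\<langle>\<cdot>,u\<rangle>\<close> is
  at most \<open>c \<parallel>\<cdot>\<parallel>\<close> on \<open>L\<close>; a Hahn--Banach extension \<open>w\<close> with \<open>\<parallel>w\<parallel>\<^sup>* \<le> c\<close> gives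
  \<open>y = u - w \<in> L\<^sup>\<bottom>\<close> with \<open>\<parallel>y - u\<parallel>\<^sup>* \<le> c\<close>.\<close>

lemma is_norm_0: "is_norm N \<Longrightarrow> N 0 = 0"
  unfolding is_norm_def by blast

lemma is_norm_scaleR: "is_norm N \<Longrightarrow> N (c *\<^sub>R x) = \<bar>c\<bar> * N x"
  unfolding is_norm_def by blast

lemma is_norm_triangle: "is_norm N \<Longrightarrow> N (x + y) \<le> N x + N y"
  unfolding is_norm_def by blast

lemma is_norm_minus: "is_norm N \<Longrightarrow> N (- x) = N x"
  using is_norm_scaleR[of N "-1" x] by simp

lemma is_norm_nonneg:
  assumes "is_norm N"
  shows "0 \<le> N x"
  using is_norm_triangle[OF assms, of x "- x"] assms by (simp add: is_norm_0 is_norm_minus)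

lemma is_norm_pos: "is_norm N \<Longrightarrow> x \<noteq> 0 \<Longrightarrow> 0 < N x"
  by (metis is_norm_def is_norm_nonneg order_le_less)

lemma is_norm_normalize: "is_norm N \<Longrightarrow> x \<noteq> 0 \<Longrightarrow> N ((1 / N x) *\<^sub>R x) = 1"
  using is_norm_pos[of N x] by (simp add: is_norm_scaleR)

lemma convex_on_is_norm:
  assumes "is_norm N"
  shows "convex_on UNIV N"
proof (rule convex_onI[OF _ convex_UNIV])
  fix t :: real and x y assume "0 < t" "t < 1"
  then show "N ((1 - t) *\<^sub>R x + t *\<^sub>R y) \<le> (1 - t) * N x + t * N y"
    using is_norm_triangle[OF assms, of "(1 - t) *\<^sub>R x" "t *\<^sub>R y"]
    by (simp add: is_norm_scaleR[OF assms])
qed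

lemma is_norm_dominates_norm:
  fixes N :: "'a::euclidean_space \<Rightarrow> real"
  assumes "is_norm N"
  obtains R where "R > 0" "\<And>x. norm x \<le> R * N x"
proof -
  have "continuous_on (sphere 0 1) N"
    using convex_on_continuous[OF open_UNIV convex_on_is_norm[OF assms]] continuous_on_subset
    by blast
  moreover have "sphere (0::'a) 1 \<noteq> {}"
    using vector_choose_size[of 1] by auto
  ultimately obtain x0 where x0: "norm x0 = 1" "\<And>y. norm y = 1 \<Longrightarrow> N x0 \<le> N y"
    using continuous_attains_inf[OF compact_sphere] by (metis mem_sphere_0)
  have pos: "0 < N x0"
    using x0(1) is_norm_pos[OF assms, of x0] by (metis norm_zero zero_neq_one)
  have "norm x \<le> (1 / N x0) * N x" for x
  proof (cases "x = 0")
    case False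
    then have "N x0 \<le> N ((1 / norm x) *\<^sub>R x)" by (intro x0(2)) simp
    then show ?thesis
      using False pos by (simp add: is_norm_scaleR[OF assms] field_simps)
  qed (simp add: is_norm_0[OF assms])
  with that pos show ?thesis by (metis divide_pos_pos zero_less_one)
qed

lemma bounded_is_norm_ball:
  fixes N :: "'a::euclidean_space \<Rightarrow> real"
  assumes "is_norm N"
  shows "bounded {x. N x \<le> 1}"
proof -
  obtain R where R: "R > 0" "\<And>x. norm x \<le> R * N x"
    using is_norm_dominates_norm[OF assms] by blast
  have "norm x \<le> R" if "N x \<le> 1" for x
    using R(2)[of x] mult_left_mono[OF that, of R] R(1) by linarith
  then show ?thesis by (auto simp: bounded_iff)
qed

lemma inner_le_dual_norm:
  fixes N :: "'a::euclidean_space \<Rightarrow> real"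
  assumes "is_norm N"
  shows "v \<bullet> x \<le> N x * dual_norm N v"
proof (cases "x = 0")
  case False
  obtain R where R: "R > 0" "\<And>x. norm x \<le> R * N x"
    using is_norm_dominates_norm[OF assms] by blast
  have "v \<bullet> z \<le> norm v * R" if "N z = 1" for z
    using norm_cauchy_schwarz[of v z] R(2)[of z] that mult_left_mono[of "norm z" R "norm v"]
    by (simp add: order_trans)
  then have "bdd_above {v \<bullet> z | z. N z = 1}" by (auto simp: bdd_above_def)
  moreover have "N ((1 / N x) *\<^sub>R x) = 1"
    using is_norm_normalize[OF assms False] .
  ultimately have "v \<bullet> ((1 / N x) *\<^sub>R x) \<le> dual_norm N v"
    unfolding dual_norm_def by (blast intro: cSup_upper)
  then show ?thesis
    using is_norm_pos[OF assms False] by (simp add: field_simps)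
qed (simp add: is_norm_0[OF assms])

lemma dual_norm_nonneg:
  fixes N :: "'a::euclidean_space \<Rightarrow> real"
  assumes "is_norm N"
  shows "0 \<le> dual_norm N v"
proof -
  obtain b :: 'a where "b \<in> Basis" using nonempty_Basis by blast
  then have "0 < N b" using is_norm_pos[OF assms] nonzero_Basis by blast
  moreover have "0 \<le> N b * dual_norm N v"
    using inner_le_dual_norm[OF assms, of v b] inner_le_dual_norm[OF assms, of v "- b"]
    by (simp add: is_norm_minus[OF assms])
  ultimately show ?thesis by (simp add: zero_le_mult_iff)
qed

lemma dual_norm_le:
  fixes N :: "'a::euclidean_space \<Rightarrow> real"
  assumes "is_norm N" and "\<And>x. N x = 1 \<Longrightarrow> v \<bullet> x \<le> c"
  shows "dual_norm N v \<le> c"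
proof -
  obtain b :: 'a where "b \<in> Basis" using nonempty_Basis by blast
  then have "N ((1 / N b) *\<^sub>R b) = 1"
    using is_norm_normalize[OF assms(1)] nonzero_Basis by blast
  then show ?thesis
    unfolding dual_norm_def using assms(2) by (auto intro!: cSup_least)
qed

lemma convex_strict_epigraph:
  assumes "convex_on S f"
  shows "convex {(x, t). x \<in> S \<and> f x < t}"
proof (rule convexI)
  fix q1 q2 :: "'a \<times> real" and a b :: real
  assume "q1 \<in> {(x, t). x \<in> S \<and> f x < t}" "q2 \<in> {(x, t). x \<in> S \<and> f x < t}"
    and ab: "0 \<le> a" "0 \<le> b" "a + b = 1"
  then obtain x1 t1 x2 t2 where q: "q1 = (x1, t1)" "q2 = (x2, t2)"
    and "x1 \<in> S" "x2 \<in> S" "f x1 < t1" "f x2 < t2" by auto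
  have "f (a *\<^sub>R x1 + b *\<^sub>R x2) \<le> a * f x1 + b * f x2"
    using convex_onD[OF assms, of b x1 x2] ab \<open>x1 \<in> S\<close> \<open>x2 \<in> S\<close> by (simp add: eq_diff_eq[symmetric])
  also have "\<dots> < a * t1 + b * t2"
  proof (cases "a = 0")
    case False
    then have "a * f x1 < a * t1" using ab(1) \<open>f x1 < t1\<close> by simp
    moreover have "b * f x2 \<le> b * t2" using ab(2) \<open>f x2 < t2\<close> by (simp add: mult_left_mono)
    ultimately show ?thesis by simp
  qed (use \<open>f x2 < t2\<close> ab(3) in simp)
  moreover have "a *\<^sub>R x1 + b *\<^sub>R x2 \<in> S"
    using convexD[OF convex_on_imp_convex[OF assms] \<open>x1 \<in> S\<close> \<open>x2 \<in> S\<close> ab] .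
  ultimately show "a *\<^sub>R q1 + b *\<^sub>R q2 \<in> {(x, t). x \<in> S \<and> f x < t}" by (simp add: q)
qed

lemma subspace_inner_bounded_below_eq_0:
  assumes "subspace L" and bounded_below: "\<And>x. x \<in> L \<Longrightarrow> b \<le> v \<bullet> x" and "x \<in> L"
  shows "v \<bullet> x = 0"
proof (rule ccontr)
  assume "v \<bullet> x \<noteq> 0"
  have "b \<le> v \<bullet> (((b - 1) / (v \<bullet> x)) *\<^sub>R x)"
    by (intro bounded_below subspace_scale[OF assms(1,3)])
  also have "\<dots> = b - 1" using \<open>v \<bullet> x \<noteq> 0\<close> by simp
  finally show False by simp
qed

text \<open>Finite-dimensional Hahn--Banach, by separating the strict epigraph of \<open>p\<close> from the graph of
  \<open>u\<close> over \<open>L\<close>.\<close>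

lemma convex_dominated_extension:
  fixes p :: "'a::euclidean_space \<Rightarrow> real"
  assumes "convex_on UNIV p" and "subspace L" and dominated: "\<And>x. x \<in> L \<Longrightarrow> u \<bullet> x \<le> p x"
  obtains w where "\<And>x. x \<in> L \<Longrightarrow> w \<bullet> x = u \<bullet> x" and "\<And>z. w \<bullet> z \<le> p z"
proof -
  define G :: "('a \<times> real) set" where "G = {(z, t). z \<in> UNIV \<and> p z < t}"
  define H :: "('a \<times> real) set" where "H = (\<lambda>x. (x, u \<bullet> x)) ` L"
  have convex_G: "convex G"
    unfolding G_def by (rule convex_strict_epigraph[OF assms(1)])
  have convex_H: "convex H"
    unfolding H_def
    by (intro convex_linear_image subspace_imp_convex[OF assms(2)] bounded_linear.linear
        bounded_linear_Pair bounded_linear_ident bounded_linear_inner_right)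
  have "(0, p 0 + 1) \<in> G" "(0, u \<bullet> 0) \<in> H"
    using subspace_0[OF assms(2)] by (auto simp: G_def H_def)
  then have nonempty: "G \<noteq> {}" "H \<noteq> {}" by blast+
  have "(x, u \<bullet> x) \<notin> G" if "x \<in> L" for x
    using dominated[OF that] by (simp add: G_def)
  then have disjoint: "G \<inter> H = {}" by (auto simp: H_def)
  obtain q b where q: "q \<noteq> 0" "\<forall>g\<in>G. q \<bullet> g \<le> b" "\<forall>h\<in>H. b \<le> q \<bullet> h"
    using separating_hyperplane_sets[OF convex_G convex_H nonempty disjoint] by blast
  obtain a \<beta> where q_eq: "q = (a, \<beta>)" by fastforce
  have graph: "b \<le> (a + \<beta> *\<^sub>R u) \<bullet> x" if "x \<in> L" for x
    using q(3) that by (auto simp: H_def q_eq inner_add_left)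
  then have kernel: "(a + \<beta> *\<^sub>R u) \<bullet> x = 0" if "x \<in> L" for x
    using subspace_inner_bounded_below_eq_0[OF assms(2) _ that] by blast
  have epigraph: "a \<bullet> z + \<beta> * t \<le> 0" if "p z < t" for z t
    using q(2) that graph[OF subspace_0[OF assms(2)]] by (fastforce simp: G_def q_eq)
  have "\<beta> < 0"
  proof -
    have "\<beta> * (\<bar>p 0\<bar> + 1) \<le> 0" using epigraph[of 0 "\<bar>p 0\<bar> + 1"] by simp
    then have "\<beta> \<le> 0" by (auto simp: mult_le_0_iff)
    moreover have "\<beta> \<noteq> 0"
    proof
      assume "\<beta> = 0"
      then have "a \<bullet> a \<le> 0" using epigraph[of a "p a + 1"] by simp
      then have "a = 0" by (metis inner_gt_zero_iff not_le)
      then show False using q(1) \<open>\<beta> = 0\<close> by (simp add: q_eq zero_prod_def)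
    qed
    ultimately show ?thesis by simp
  qed
  define w where "w = (1 / - \<beta>) *\<^sub>R a"
  show thesis
  proof (rule that)
    show "w \<bullet> x = u \<bullet> x" if "x \<in> L" for x
      using kernel[OF that] \<open>\<beta> < 0\<close> by (simp add: w_def inner_add_left field_simps)
    show "w \<bullet> z \<le> p z" for z
    proof (rule field_le_epsilon)
      fix \<epsilon> :: real assume "0 < \<epsilon>"
      then have "a \<bullet> z + \<beta> * (p z + \<epsilon>) \<le> 0" by (intro epigraph) simp
      then show "w \<bullet> z \<le> p z + \<epsilon>" using \<open>\<beta> < 0\<close> by (simp add: w_def field_simps)
    qed
  qed
qed

lemma inner_le_dual_norm_orthogonal:
  fixes N :: "'a::euclidean_space \<Rightarrow> real"
  assumes "is_norm N" and "x \<in> L" and "N x \<le> 1" and "y \<in> orthogonal_comp L"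
  shows "x \<bullet> u \<le> dual_norm N (y - u)"
proof -
  have "y \<bullet> x = 0"
    using assms(2,4) by (simp add: orthogonal_comp_def orthogonal_def inner_commute)
  then have "x \<bullet> u = (y - u) \<bullet> (- x)"
    by (simp add: inner_diff_left inner_commute[of x u])
  also have "\<dots> \<le> N x * dual_norm N (y - u)"
    using inner_le_dual_norm[OF assms(1)] is_norm_minus[OF assms(1)] by metis
  also have "\<dots> \<le> dual_norm N (y - u)"
    using assms(3) dual_norm_nonneg[OF assms(1)]
    by (simp add: mult_left_le_one_le is_norm_nonneg[OF assms(1)])
  finally show ?thesis .
qed

lemma exists_orthogonal_dual_norm_le:
  fixes N :: "'a::euclidean_space \<Rightarrow> real"
  assumes "is_norm N" and "subspace L" and "0 \<le> c"
    and bound: "\<And>x. x \<in> L \<Longrightarrow> N x \<le> 1 \<Longrightarrow> x \<bullet> u \<le> c"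
  obtains y where "y \<in> orthogonal_comp L" and "dual_norm N (y - u) \<le> c"
proof -
  have dominated: "u \<bullet> x \<le> c * N x" if "x \<in> L" for x
  proof (cases "x = 0")
    case False
    have "((1 / N x) *\<^sub>R x) \<bullet> u \<le> c"
      using bound[of "(1 / N x) *\<^sub>R x"] is_norm_normalize[OF assms(1) False]
        subspace_scale[OF assms(2) that] by simp
    then show ?thesis
      using is_norm_pos[OF assms(1) False] by (simp add: inner_commute field_simps)
  qed (simp add: is_norm_0[OF assms(1)])
  have "convex_on UNIV (\<lambda>x. c * N x)"
    using assms(3) convex_on_is_norm[OF assms(1)] by (rule convex_on_cmul)
  then obtain w where w: "\<And>x. x \<in> L \<Longrightarrow> w \<bullet> x = u \<bullet> x" "\<And>z. w \<bullet> z \<le> c * N z"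
    using convex_dominated_extension[OF _ assms(2) dominated] by blast
  show thesis
  proof (rule that)
    show "u - w \<in> orthogonal_comp L"
      using w(1) by (simp add: orthogonal_comp_def orthogonal_def inner_diff_right inner_commute)
    have "(u - w - u) \<bullet> z \<le> c" if "N z = 1" for z
      using w(2)[of "- z"] that by (simp add: is_norm_minus[OF assms(1)])
    then show "dual_norm N (u - w - u) \<le> c"
      by (rule dual_norm_le[OF assms(1)])
  qed
qed

lemma convex_subspace_is_norm_ball:
  assumes "is_norm N" and "subspace L"
  shows "convex {x\<in>L. N x \<le> 1}"
proof (rule convexI)
  fix x y and u v :: real
  assume "x \<in> {x\<in>L. N x \<le> 1}" "y \<in> {x\<in>L. N x \<le> 1}" "0 \<le> u" "0 \<le> v" "u + v = 1"
  then show "u *\<^sub>R x + v *\<^sub>R y \<in> {x\<in>L. N x \<le> 1}"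
    using convex_lower[OF convex_on_is_norm[OF assms(1)], of x y u v] assms(2)
    by (auto intro: subspace_add subspace_scale)
qed

lemma bounded_subspace_is_norm_ball:
  fixes N :: "'a::euclidean_space \<Rightarrow> real"
  shows "is_norm N \<Longrightarrow> bounded {x\<in>L. N x \<le> 1}"
  by (rule bounded_subset[OF bounded_is_norm_ball]) auto

lemma zero_in_subspace_is_norm_ball: "is_norm N \<Longrightarrow> subspace L \<Longrightarrow> 0 \<in> {x\<in>L. N x \<le> 1}"
  by (simp add: subspace_0 is_norm_0)

lemma bounded_inner_image: "bounded B \<Longrightarrow> bounded ((\<lambda>x. x \<bullet> u) ` B)"
  by (rule bounded_linear_image[OF _ bounded_linear_inner_left])

lemma bounded_inner_bound:
  fixes A B :: "'a::real_inner set"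
  assumes "bounded A" and "bounded B"
  obtains M where "\<And>x u. x \<in> A \<Longrightarrow> u \<in> B \<Longrightarrow> \<bar>x \<bullet> u\<bar> \<le> M"
proof -
  obtain R S where "R > 0" "\<And>x. x \<in> A \<Longrightarrow> norm x \<le> R" "S > 0" "\<And>u. u \<in> B \<Longrightarrow> norm u \<le> S"
    using assms by (meson bounded_pos)
  then have "\<bar>x \<bullet> u\<bar> \<le> R * S" if "x \<in> A" "u \<in> B" for x u
    using Cauchy_Schwarz_ineq2[of x u] mult_mono[of "norm x" R "norm u" S] that by force
  then show ?thesis using that by blast
qed

lemma SUP_inner_upper: "bounded B \<Longrightarrow> x \<in> B \<Longrightarrow> x \<bullet> u \<le> (SUP x\<in>B. x \<bullet> u)"
  by (rule cSUP_upper[OF _ bounded_imp_bdd_above[OF bounded_inner_image]])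

lemma SUP_INF_le_INF_SUP:
  fixes f :: "'a \<Rightarrow> 'b \<Rightarrow> real"
  assumes "A \<noteq> {}" and "B \<noteq> {}" and bound: "\<And>x y. x \<in> A \<Longrightarrow> y \<in> B \<Longrightarrow> \<bar>f x y\<bar> \<le> M"
  shows "(SUP x\<in>A. INF y\<in>B. f x y) \<le> (INF y\<in>B. SUP x\<in>A. f x y)"
proof (intro cSUP_least cINF_greatest assms(1,2))
  fix x y assume "x \<in> A" "y \<in> B"
  have "(INF y\<in>B. f x y) \<le> f x y"
    by (intro cINF_lower bdd_belowI2[of _ "- M"] \<open>y \<in> B\<close>) (use bound \<open>x \<in> A\<close> in force)
  also have "\<dots> \<le> (SUP x\<in>A. f x y)"
    by (intro cSUP_upper bdd_aboveI2[of _ _ M] \<open>x \<in> A\<close>) (use bound \<open>y \<in> B\<close> in force)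
  finally show "(INF y\<in>B. f x y) \<le> (SUP x\<in>A. f x y)" .
qed

locale cone_order_unit =
  fixes K :: "'a::euclidean_space set" and e :: 'a
  assumes regular: "regular_closed_convex_cone K" and unit_interior: "e \<in> interior K"
begin

lemma closed_K: "closed K" and convex_K: "convex K" and cone_scaleR: "x \<in> K \<Longrightarrow> 0 \<le> c \<Longrightarrow> c *\<^sub>R x \<in> K"
  using regular unfolding regular_closed_convex_cone_def cone_def by auto

lemma zero_in_K: "0 \<in> K"
  using regular unfolding regular_closed_convex_cone_def by blast

lemma K_pointed: "x \<in> K \<Longrightarrow> - x \<in> K \<Longrightarrow> x = 0"
  using regular unfolding regular_closed_convex_cone_def by force

lemma dual_cone_inner_unit_ge:
  obtains d where "d > 0" and "\<And>a. a \<in> dual_cone K \<Longrightarrow> d * norm a \<le> a \<bullet> e"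
proof -
  obtain r where r: "r > 0" "ball e r \<subseteq> K" using unit_interior mem_interior by blast
  have "(r / 2) * norm a \<le> a \<bullet> e" if "a \<in> dual_cone K" for a
  proof (cases "a = 0")
    case False
    have "e - (r / 2 / norm a) *\<^sub>R a \<in> ball e r" using False r(1) by (simp add: dist_norm)
    then have "0 \<le> a \<bullet> (e - (r / 2 / norm a) *\<^sub>R a)"
      using r(2) that unfolding dual_cone_def by blast
    then show ?thesis
      using False by (simp add: inner_diff_right power2_norm_eq_inner[symmetric] power2_eq_square)
  qed simp
  then show ?thesis using that[of "r / 2"] r(1) by simp
qed

lemma dual_cone_inner_unit_pos: "a \<in> dual_cone K \<Longrightarrow> a \<noteq> 0 \<Longrightarrow> 0 < a \<bullet> e"
  by (metis dual_cone_inner_unit_ge mult_pos_pos order_less_le_trans zero_less_norm_iff)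

lemma normalized_mem_simplex_dual:
  assumes "a \<in> dual_cone K" and "a \<noteq> 0"
  shows "(1 / (a \<bullet> e)) *\<^sub>R a \<in> simplex_dual K e"
  using assms dual_cone_inner_unit_pos[OF assms] unfolding simplex_dual_def dual_cone_def by auto

lemma bounded_simplex_dual: "bounded (simplex_dual K e)"
proof -
  obtain d where d: "d > 0" "\<And>a. a \<in> dual_cone K \<Longrightarrow> d * norm a \<le> a \<bullet> e"
    using dual_cone_inner_unit_ge by blast
  have "norm u \<le> 1 / d" if "u \<in> simplex_dual K e" for u
    using d(2)[of u] that d(1) unfolding simplex_dual_def by (simp add: field_simps)
  then show ?thesis by (auto simp: bounded_iff)
qed

lemma bdd_below_inner_simplex_dual: "bdd_below ((\<lambda>u. x \<bullet> u) ` simplex_dual K e)"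
  by (rule bounded_imp_bdd_below[OF bounded_linear_image])
    (rule bounded_simplex_dual, rule bounded_linear_inner_right)

lemma dual_cone_if_bounded_below:
  assumes "\<And>k. k \<in> K \<Longrightarrow> b \<le> a \<bullet> k"
  shows "a \<in> dual_cone K" and "b \<le> 0"
proof -
  show "b \<le> 0" using assms[OF zero_in_K] by simp
  have "0 \<le> a \<bullet> k" if "k \<in> K" for k
  proof (rule ccontr)
    assume "\<not> 0 \<le> a \<bullet> k"
    then have "((b - 1) / (a \<bullet> k)) *\<^sub>R k \<in> K"
      using cone_scaleR[OF that] \<open>b \<le> 0\<close> by (simp add: divide_nonpos_neg)
    then have "b \<le> a \<bullet> (((b - 1) / (a \<bullet> k)) *\<^sub>R k)" by (rule assms)
    also have "\<dots> = b - 1" using \<open>\<not> 0 \<le> a \<bullet> k\<close> by simp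
    finally show False by simp
  qed
  then show "a \<in> dual_cone K" unfolding dual_cone_def by blast
qed

lemma mem_cone_iff_simplex_dual: "z \<in> K \<longleftrightarrow> (\<forall>u\<in>simplex_dual K e. 0 \<le> z \<bullet> u)"
proof (intro iffI ballI)
  fix u assume "z \<in> K" "u \<in> simplex_dual K e"
  then have "0 \<le> u \<bullet> z" by (simp add: simplex_dual_def dual_cone_def)
  then show "0 \<le> z \<bullet> u" by (simp add: inner_commute)
next
  assume nonneg: "\<forall>u\<in>simplex_dual K e. 0 \<le> z \<bullet> u"
  show "z \<in> K"
  proof (rule ccontr)
    assume "z \<notin> K"
    from separating_hyperplane_closed_point[OF convex_K closed_K this]
    obtain a b where ab: "a \<bullet> z < b" "\<forall>x\<in>K. b < a \<bullet> x" by blast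
    have "a \<in> dual_cone K" "b \<le> 0"
      using dual_cone_if_bounded_below[of b a] ab(2) by (auto intro: less_imp_le)
    moreover have "a \<noteq> 0" using ab(1) \<open>b \<le> 0\<close> by auto
    ultimately have "0 \<le> z \<bullet> ((1 / (a \<bullet> e)) *\<^sub>R a)" and "0 < a \<bullet> e"
      using nonneg normalized_mem_simplex_dual dual_cone_inner_unit_pos by blast+
    then have "0 \<le> a \<bullet> z" by (simp add: inner_commute zero_le_divide_iff)
    then show False using ab(1) \<open>b \<le> 0\<close> by simp
  qed
qed

lemma simplex_dual_nonempty: "simplex_dual K e \<noteq> {}"
proof -
  obtain b :: 'a where "b \<in> Basis" using nonempty_Basis by blast
  then have "b \<notin> K \<or> - b \<notin> K" using K_pointed nonzero_Basis by blast
  then show ?thesis using mem_cone_iff_simplex_dual by auto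
qed

lemma scaleR_unit_mem_cone_iff: "c *\<^sub>R e \<in> K \<longleftrightarrow> 0 \<le> c"
  using simplex_dual_nonempty
  by (auto simp: mem_cone_iff_simplex_dual simplex_dual_def inner_commute)

lemma le_INF_simplex_dual_iff: "x - t *\<^sub>R e \<in> K \<longleftrightarrow> t \<le> (INF u\<in>simplex_dual K e. x \<bullet> u)"
proof -
  have "(x - t *\<^sub>R e) \<bullet> u = x \<bullet> u - t" if "u \<in> simplex_dual K e" for u
    using that by (simp add: simplex_dual_def inner_diff_left inner_commute[of e])
  then show ?thesis
    by (simp add: mem_cone_iff_simplex_dual
        le_cINF_iff[OF simplex_dual_nonempty bdd_below_inner_simplex_dual])
qed

lemma lambda_e_eq_INF: "lambda_e K e x = (INF u\<in>simplex_dual K e. x \<bullet> u)"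
proof -
  have "{t. x - t *\<^sub>R e \<in> K} = {..(INF u\<in>simplex_dual K e. x \<bullet> u)}"
    using le_INF_simplex_dual_iff by auto
  then show ?thesis unfolding lambda_e_def by simp
qed

lemma norm_e_le_iff: "norm_e K e x \<le> \<alpha> \<longleftrightarrow> 0 \<le> \<alpha> \<and> x + \<alpha> *\<^sub>R e \<in> K \<and> - x + \<alpha> *\<^sub>R e \<in> K"
proof -
  define m where "m = max 0 (max (- (INF u\<in>simplex_dual K e. x \<bullet> u))
    (- (INF u\<in>simplex_dual K e. - x \<bullet> u)))"
  have "x + \<alpha> *\<^sub>R e \<in> K \<longleftrightarrow> - \<alpha> \<le> (INF u\<in>simplex_dual K e. x \<bullet> u)"
    and "- x + \<alpha> *\<^sub>R e \<in> K \<longleftrightarrow> - \<alpha> \<le> (INF u\<in>simplex_dual K e. - x \<bullet> u)" for \<alpha>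
    using le_INF_simplex_dual_iff[of x "- \<alpha>"] le_INF_simplex_dual_iff[of "- x" "- \<alpha>"] by simp_all
  then have "{\<alpha>. 0 \<le> \<alpha> \<and> x + \<alpha> *\<^sub>R e \<in> K \<and> - x + \<alpha> *\<^sub>R e \<in> K} = {m..}"
    unfolding m_def by auto
  then have "norm_e K e x = m" unfolding norm_e_def by simp
  with \<open>{\<alpha>. 0 \<le> \<alpha> \<and> _} = {m..}\<close> show ?thesis by auto
qed

lemma norm_e_unit: "norm_e K e e = 1"
proof -
  have "norm_e K e e \<le> \<alpha> \<longleftrightarrow> 1 \<le> \<alpha>" for \<alpha>
    using scaleR_unit_mem_cone_iff[of "1 + \<alpha>"] scaleR_unit_mem_cone_iff[of "\<alpha> - 1"]
    by (auto simp: norm_e_le_iff algebra_simps)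
  then show ?thesis by (meson order.antisym order_refl)
qed

lemma dual_norm_norm_e:
  assumes "u \<in> dual_cone K"
  shows "dual_norm (norm_e K e) u = u \<bullet> e"
  unfolding dual_norm_def
proof (rule cSup_eq_maximum)
  show "u \<bullet> e \<in> {u \<bullet> x |x. norm_e K e x = 1}" using norm_e_unit by blast
  show "y \<le> u \<bullet> e" if y: "y \<in> {u \<bullet> x |x. norm_e K e x = 1}" for y
  proof -
    obtain x where "y = u \<bullet> x" "norm_e K e x = 1" using y by blast
    then have "- x + e \<in> K" using norm_e_le_iff[of x 1] by simp
    then have "0 \<le> u \<bullet> (e - x)" using assms unfolding dual_cone_def by simp
    then show ?thesis using \<open>y = u \<bullet> x\<close> by (simp add: inner_diff_right)
  qed
qed

lemma separating_simplex_dual_interior: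
  assumes "convex S" and "S \<noteq> {}" and "S \<inter> interior K = {}"
  obtains u where "u \<in> simplex_dual K e" and "\<And>s. s \<in> S \<Longrightarrow> s \<bullet> u \<le> 0"
proof -
  obtain a b where ab: "a \<noteq> 0" "\<And>s. s \<in> S \<Longrightarrow> a \<bullet> s \<le> b" "\<And>k. k \<in> interior K \<Longrightarrow> b \<le> a \<bullet> k"
    using separating_hyperplane_sets[OF assms(1) convex_interior[OF convex_K] assms(2) _ assms(3)]
      unit_interior by blast
  have "interior K \<subseteq> {k. a \<bullet> k \<ge> b}" using ab(3) by blast
  then have "closure (interior K) \<subseteq> {k. a \<bullet> k \<ge> b}"
    by (rule closure_minimal[OF _ closed_halfspace_ge])
  then have "b \<le> a \<bullet> k" if "k \<in> K" for k
    using that convex_closure_interior[OF convex_K] unit_interior closed_K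
    by (auto simp: closure_closed)
  note dual_cone_if_bounded_below[OF this]
  then have "a \<in> dual_cone K" "b \<le> 0" by simp_all
  show thesis
  proof (rule that[OF normalized_mem_simplex_dual[OF \<open>a \<in> dual_cone K\<close> ab(1)]])
    fix s assume "s \<in> S"
    then have "a \<bullet> s \<le> 0" using ab(2) \<open>b \<le> 0\<close> by fastforce
    then show "s \<bullet> ((1 / (a \<bullet> e)) *\<^sub>R a) \<le> 0"
      using divide_nonpos_pos dual_cone_inner_unit_pos[OF \<open>a \<in> dual_cone K\<close> ab(1)]
      by (simp add: inner_commute[of s a])
  qed
qed

lemma minimax_simplex_dual:
  assumes "convex B" and le: "\<And>x. x \<in> B \<Longrightarrow> (INF u\<in>simplex_dual K e. x \<bullet> u) \<le> c"
  obtains u where "u \<in> simplex_dual K e" and "\<And>x. x \<in> B \<Longrightarrow> x \<bullet> u \<le> c"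
proof (cases "B = {}")
  case True
  then show ?thesis using simplex_dual_nonempty that by blast
next
  case False
  define S where "S = (\<lambda>x. x - c *\<^sub>R e) ` B"
  have "S \<inter> interior K = {}"
  proof (rule ccontr)
    assume "S \<inter> interior K \<noteq> {}"
    then obtain x where x: "x \<in> B" "x - c *\<^sub>R e \<in> interior K" unfolding S_def by blast
    then obtain r where r: "r > 0" "ball (x - c *\<^sub>R e) r \<subseteq> K" using mem_interior by blast
    define \<delta> where "\<delta> = r / (norm e + 1)"
    have "0 < norm e + 1" by (simp add: add_nonneg_pos)
    then have "\<delta> > 0" and "\<delta> * (norm e + 1) = r"
      using r(1) by (simp_all add: \<delta>_def)
    then have "\<delta> * norm e < r" by (simp add: distrib_left)
    moreover have "dist (x - c *\<^sub>R e) (x - (c + \<delta>) *\<^sub>R e) = \<delta> * norm e"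
      using \<open>\<delta> > 0\<close> by (simp add: dist_norm scaleR_add_left)
    ultimately have "x - (c + \<delta>) *\<^sub>R e \<in> K"
      using r(2) by auto
    then have "c + \<delta> \<le> (INF u\<in>simplex_dual K e. x \<bullet> u)"
      by (rule le_INF_simplex_dual_iff[THEN iffD1])
    then show False using le[OF x(1)] \<open>\<delta> > 0\<close> by simp
  qed
  moreover have "convex S" unfolding S_def using assms(1) by (rule convex_translation_subtract)
  ultimately obtain u where u: "u \<in> simplex_dual K e" "\<And>s. s \<in> S \<Longrightarrow> s \<bullet> u \<le> 0"
    using separating_simplex_dual_interior False unfolding S_def by blast
  have "x \<bullet> u \<le> c" if "x \<in> B" for x
  proof -
    have "(x - c *\<^sub>R e) \<bullet> u \<le> 0" using u(2) that unfolding S_def by blast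
    then show ?thesis using u(1) by (simp add: simplex_dual_def inner_diff_left inner_commute[of e])
  qed
  then show ?thesis using that u(1) by blast
qed

lemma INF_SUP_le_SUP:
  assumes "bounded B" and "B \<noteq> {}" and "u \<in> simplex_dual K e"
  shows "(INF v\<in>simplex_dual K e. SUP x\<in>B. x \<bullet> v) \<le> (SUP x\<in>B. x \<bullet> u)"
proof (rule cINF_lower[OF _ assms(3)])
  obtain M where M: "\<And>x v. x \<in> B \<Longrightarrow> v \<in> simplex_dual K e \<Longrightarrow> \<bar>x \<bullet> v\<bar> \<le> M"
    using bounded_inner_bound[OF assms(1) bounded_simplex_dual] by blast
  obtain x0 where "x0 \<in> B" using assms(2) by blast
  have "- M \<le> (SUP x\<in>B. x \<bullet> v)" if "v \<in> simplex_dual K e" for v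
    using M[OF \<open>x0 \<in> B\<close> that] SUP_inner_upper[OF assms(1) \<open>x0 \<in> B\<close>, of v] by linarith
  then show "bdd_below ((\<lambda>v. SUP x\<in>B. x \<bullet> v) ` simplex_dual K e)" by (rule bdd_belowI2)
qed

lemma exists_simplex_dual_le_SUP_INF:
  assumes "convex B" and "bounded B"
  obtains u where "u \<in> simplex_dual K e"
    and "\<And>x. x \<in> B \<Longrightarrow> x \<bullet> u \<le> (SUP x\<in>B. INF v\<in>simplex_dual K e. x \<bullet> v)"
proof -
  obtain M where M: "\<And>x u. x \<in> B \<Longrightarrow> u \<in> simplex_dual K e \<Longrightarrow> \<bar>x \<bullet> u\<bar> \<le> M"
    using bounded_inner_bound[OF assms(2) bounded_simplex_dual] by blast
  obtain u0 where u0: "u0 \<in> simplex_dual K e" using simplex_dual_nonempty by blast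
  have "(INF v\<in>simplex_dual K e. x \<bullet> v) \<le> (SUP x\<in>B. INF v\<in>simplex_dual K e. x \<bullet> v)" if "x \<in> B" for x
  proof (rule cSUP_upper[OF that bdd_aboveI2])
    show "(INF v\<in>simplex_dual K e. y \<bullet> v) \<le> M" if "y \<in> B" for y
      using cINF_lower[OF bdd_below_inner_simplex_dual u0, of y] M[OF that u0] by linarith
  qed
  then show ?thesis using minimax_simplex_dual[OF assms(1)] that by blast
qed

lemma INF_SUP_eq_SUP_INF:
  assumes "convex B" and "bounded B" and "B \<noteq> {}"
  shows "(INF u\<in>simplex_dual K e. SUP x\<in>B. x \<bullet> u) = (SUP x\<in>B. INF u\<in>simplex_dual K e. x \<bullet> u)"
    (is "?A = ?C")
proof (rule antisym)
  obtain u where u: "u \<in> simplex_dual K e" "\<And>x. x \<in> B \<Longrightarrow> x \<bullet> u \<le> ?C"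
    using exists_simplex_dual_le_SUP_INF[OF assms(1,2)] by blast
  have "?A \<le> (SUP x\<in>B. x \<bullet> u)" by (rule INF_SUP_le_SUP[OF assms(2,3) u(1)])
  also have "\<dots> \<le> ?C" by (rule cSUP_least[OF assms(3) u(2)])
  finally show "?A \<le> ?C" .
  obtain M where "\<And>x u. x \<in> B \<Longrightarrow> u \<in> simplex_dual K e \<Longrightarrow> \<bar>x \<bullet> u\<bar> \<le> M"
    using bounded_inner_bound[OF assms(2) bounded_simplex_dual] by blast
  then show "?C \<le> ?A" by (rule SUP_INF_le_INF_SUP[OF assms(3) simplex_dual_nonempty])
qed

lemma INF_SUP_le_dual_norm:
  assumes "is_norm N" and "subspace L"
    and "u \<in> simplex_dual K e" and "y \<in> orthogonal_comp L"
  shows "(INF v\<in>simplex_dual K e. SUP x\<in>{x\<in>L. N x \<le> 1}. x \<bullet> v) \<le> dual_norm N (y - u)"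
proof -
  have "bounded {x\<in>L. N x \<le> 1}" "{x\<in>L. N x \<le> 1} \<noteq> {}"
    using bounded_subspace_is_norm_ball zero_in_subspace_is_norm_ball assms(1,2) by blast+
  then have "(INF v\<in>simplex_dual K e. SUP x\<in>{x\<in>L. N x \<le> 1}. x \<bullet> v)
      \<le> (SUP x\<in>{x\<in>L. N x \<le> 1}. x \<bullet> u)"
    by (rule INF_SUP_le_SUP[OF _ _ assms(3)])
  also have "\<dots> \<le> dual_norm N (y - u)"
    by (rule cSUP_least[OF \<open>{x\<in>L. N x \<le> 1} \<noteq> {}\<close>])
      (use inner_le_dual_norm_orthogonal[OF assms(1) _ _ assms(4)] in blast)
  finally show ?thesis .
qed

lemma exists_dual_norm_le_INF_SUP:
  assumes "is_norm N" and "subspace L"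
  obtains u y where "u \<in> simplex_dual K e" and "y \<in> orthogonal_comp L"
    and "dual_norm N (y - u) \<le> (INF v\<in>simplex_dual K e. SUP x\<in>{x\<in>L. N x \<le> 1}. x \<bullet> v)"
proof -
  define B where "B = {x\<in>L. N x \<le> 1}"
  define A where "A = (INF v\<in>simplex_dual K e. SUP x\<in>B. x \<bullet> v)"
  have "convex B" "bounded B" "0 \<in> B"
    unfolding B_def using convex_subspace_is_norm_ball bounded_subspace_is_norm_ball
      zero_in_subspace_is_norm_ball assms by blast+
  then have "B \<noteq> {}" by blast
  have "0 \<le> A" unfolding A_def
  proof (rule cINF_greatest[OF simplex_dual_nonempty])
    show "0 \<le> (SUP x\<in>B. x \<bullet> v)" for v
      using SUP_inner_upper[OF \<open>bounded B\<close> \<open>0 \<in> B\<close>, of v] by simp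
  qed
  obtain u where u: "u \<in> simplex_dual K e" "\<And>x. x \<in> B \<Longrightarrow> x \<bullet> u \<le> A"
    using exists_simplex_dual_le_SUP_INF[OF \<open>convex B\<close> \<open>bounded B\<close>]
    unfolding A_def INF_SUP_eq_SUP_INF[OF \<open>convex B\<close> \<open>bounded B\<close> \<open>B \<noteq> {}\<close>] by blast
  obtain y where "y \<in> orthogonal_comp L" "dual_norm N (y - u) \<le> A"
    using exists_orthogonal_dual_norm_le[OF assms \<open>0 \<le> A\<close>] u(2) unfolding B_def by blast
  then show thesis using that u(1) unfolding A_def B_def by blast
qed

lemma nu_eq_INF_SUP:
  assumes "is_norm N" and "subspace L"
  shows "nu N (norm_e K e) K L = (INF u\<in>simplex_dual K e. SUP x\<in>{x\<in>L. N x \<le> 1}. x \<bullet> u)"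
    (is "_ = ?A")
proof -
  define NS where "NS = {dual_norm N (y - u) | u y. u \<in> simplex_dual K e \<and> y \<in> orthogonal_comp L}"
  have "u \<in> dual_cone K \<and> y \<in> orthogonal_comp L \<and> dual_norm (norm_e K e) u = 1
      \<longleftrightarrow> u \<in> simplex_dual K e \<and> y \<in> orthogonal_comp L" for u y
    by (auto simp: simplex_dual_def dual_norm_norm_e)
  then have "nu N (norm_e K e) K L = Inf NS"
    unfolding nu_def NS_def by simp
  also have "\<dots> = ?A"
  proof (rule antisym)
    obtain u y where "u \<in> simplex_dual K e" "y \<in> orthogonal_comp L"
      and le: "dual_norm N (y - u) \<le> ?A"
      using exists_dual_norm_le_INF_SUP[OF assms] by blast
    then have "dual_norm N (y - u) \<in> NS" unfolding NS_def by blast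
    moreover have "bdd_below NS"
      unfolding NS_def by (rule bdd_belowI[of _ 0]) (auto simp: dual_norm_nonneg[OF assms(1)])
    ultimately show "Inf NS \<le> ?A" using cInf_lower2 le by blast
    have "0 \<in> orthogonal_comp L" by (simp add: orthogonal_comp_def orthogonal_def)
    then have "NS \<noteq> {}" using simplex_dual_nonempty unfolding NS_def by blast
    then show "?A \<le> Inf NS"
    proof (rule cInf_greatest)
      fix z assume "z \<in> NS"
      then obtain u y where "z = dual_norm N (y - u)" "u \<in> simplex_dual K e" "y \<in> orthogonal_comp L"
        unfolding NS_def by blast
      then show "?A \<le> z" using INF_SUP_le_dual_norm[OF assms] by simp
    qed
  qed
  finally show ?thesis .
qed

end

theorem mainTheorem7:
  fixes K :: "'a::euclidean_space set" and e :: 'a and N :: "'a \<Rightarrow> real"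
    and L :: "'a set" and m :: nat
  assumes "regular_closed_convex_cone K"
    and "e \<in> interior K"
    and "is_norm N"
    and "1 \<le> m" and "m < DIM('a)"
    and "subspace L" and "dim L = m"
  shows "nu N (norm_e K e) K L
           = (INF u\<in>simplex_dual K e. SUP x\<in>{x\<in>L. N x \<le> 1}. x \<bullet> u)
         \<and> (INF u\<in>simplex_dual K e. SUP x\<in>{x\<in>L. N x \<le> 1}. x \<bullet> u)
           = (SUP x\<in>{x\<in>L. N x \<le> 1}. INF u\<in>simplex_dual K e. x \<bullet> u)
         \<and> (SUP x\<in>{x\<in>L. N x \<le> 1}. INF u\<in>simplex_dual K e. x \<bullet> u)
           = (SUP x\<in>{x\<in>L. N x \<le> 1}. lambda_e K e x)"
proof -
  interpret cone_order_unit K e using assms(1,2) by unfold_locales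
  have "convex {x\<in>L. N x \<le> 1}" "bounded {x\<in>L. N x \<le> 1}" "{x\<in>L. N x \<le> 1} \<noteq> {}"
    using convex_subspace_is_norm_ball bounded_subspace_is_norm_ball
      zero_in_subspace_is_norm_ball assms(3,6) by blast+
  then show ?thesis
    using nu_eq_INF_SUP[OF assms(3,6)] INF_SUP_eq_SUP_INF by (simp add: lambda_e_eq_INF)
qed

end
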